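(* Let $\mathcal C$ be an $\mathbb F_q$-conic in a Baer subplane $\mathcal B$ of $\mathrm{PG}(2,q^2)$ that is secant to $\ell_\infty$, and let the $\mathbb F_{q^2}$-conic $\mathcal C^+$ meet $\ell_\infty$ in the points $\bar P,\bar Q$ (possibly equal). Then in $\mathrm{PG}(4,q)$, $[\mathcal C]$ is a non-degenerate conic in the plane $[\mathcal B]$, and $[\mathcal C^+]\cap\Sigma_\infty=[P]\cup[Q]$. Moreover: (1) if $\bar P=\bar Q$ then $\bar P\in\mathcal B$ and $[\mathcal C]$ meets $\Sigma_\infty$ in the single point $[P]\cap[\mathcal B]$; (2) if $\bar P\ne\bar Q$ and $\bar P,\bar Q\in\mathcal B$, then $[\mathcal C]$ meets $\Sigma_\infty$ in the two points $[P]\cap[\mathcal B]$ and $[Q]\cap[\mathcal B]$; (3) if $\bar P\neq\bar Q$ and $\bar P,\bar Q\notin\mathcal B$, then $[\mathcal C]$ is a $(PQ^q)$-special conic.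
   Context: Bruck–Bose setting: $q$ a prime power; $\Sigma_\infty$ a hyperplane of $\mathrm{PG}(4,q)$ with regular spread $\mathcal S$; affine points $A$ of $\mathrm{PG}(2,q^2)$ correspond to points $[A]$ of $\mathrm{PG}(4,q)\setminus\Sigma_\infty$, points $\bar T\in\ell_\infty$ to spread lines $[T]$, lines $\ne\ell_\infty$ to planes not in $\Sigma_\infty$ containing a spread line. In $\mathrm{PG}(4,q^2)$ the transversals of $\mathcal S$ are conjugate lines $g,g^q$ (conjugation $X\mapsto X^q$ of coordinates) with $[T]^\star=TT^q$ where $T=[T]^\star\cap g$; $\mathcal V^\star$ denotes the extension to $\mathrm{PG}(4,q^2)$ of a set defined by equations over $\mathbb F_q$. An $\mathbb F_{q^2}$-conic is a non-degenerate conic of $\mathrm{PG}(2,q^2)$; an $\mathbb F_q$-conic is a non-degenerate conic of a Baer subplane; for an $\mathbb F_q$-conic $\mathcal C$, $\mathcal C^+$ is the unique $\mathbb F_{q^2}$-conic containing it. For a non-degenerate conic $\mathcal O$ of $\mathrm{PG}(2,q^2)$ with equation $f=0$, writing $f=f_\infty+\tau f_0$ after substituting $x=x_0+x_1\tau$, $y=y_0+y_1\tau$ ($\tau$ a primitive element of $\mathbb F_{q^2}$, $f_\infty,f_0$ quadratic forms over $\mathbb F_q$ in $(x_0,x_1,y_0,y_1,z)$), $[\mathcal O]$ is the intersection of the quadrics $f_\infty=0$, $f_0=0$ of $\mathrm{PG}(4,q)$; its affine points are the $[A]$, $A\in\mathcal O$ affine. For a Baer subplane $\mathcal B$ secant to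 $\ell_\infty$ (meeting it in a Baer subline), $[\mathcal B]$ is the plane of $\mathrm{PG}(4,q)$, not in $\Sigma_\infty$ and containing no spread line, whose affine points are the $[X]$, $X$ affine in $\mathcal B$; for $\mathcal C\subset\mathcal B$, $[\mathcal C]$ denotes the closure in $[\mathcal B]$ of $\{[X]: X\in\mathcal C \text{ affine}\}$ (its points on $\Sigma_\infty$ being $[T]\cap[\mathcal B]$ for $\bar T\in\mathcal C\cap\ell_\infty$). For distinct points $P,Q\in g$, a non-degenerate conic $\mathcal N$ of $\mathrm{PG}(4,q)$ is $(PQ^q)$-special if $\mathcal N^\star$ contains one point of the line $PQ^q$ and one point of the line $P^qQ$. *)

theory Defs
  imports "HOL-Analysis.Finite_Cartesian_Product" "HOL-Library.Numeral_Type"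
begin

text \<open>Conventions.  'k is a finite field playing the role of GF(q^2), where
  CARD('k) = q^2.  GF(q) is the subfield of elements fixed by x \<mapsto> x^q,
  and x \<mapsto> x^q is the conjugation.  Points of PG(2,q^2) are nonzero vectors
  of 'k^3 (coordinates (x,y,z), indices 1,2,3); a set of points is a set of
  nonzero vectors (a union of punctured 1-dim subspaces).  l_inf is z = 0.
  Points of PG(4,q^2) are nonzero vectors of 'k^5 with coordinates
  (x0,x1,y0,y1,z) (indices 1..5); points of PG(4,q) are the nonzero vectors
  all of whose coordinates lie in GF(q) (again sets of points are sets of
  representing vectors).\<close>

definition Fq :: "nat \<Rightarrow> 'k::field set" where
  "Fq q = {x. x ^ q = x}"

definition conjv :: "nat \<Rightarrow> 'k::field ^ 'n \<Rightarrow> 'k ^ 'n" where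
  "conjv q v = (\<chi> i. (v $ i) ^ q)"

definition primitive_elt :: "'k::field \<Rightarrow> bool" where
  "primitive_elt t \<longleftrightarrow> (\<forall>y. y \<noteq> 0 \<longrightarrow> (\<exists>n::nat. y = t ^ n))"

definition lspan :: "'k::field set \<Rightarrow> ('k ^ 'n) set \<Rightarrow> ('k ^ 'n) set" where
  "lspan K S = {v. \<exists>F c. finite F \<and> F \<subseteq> S \<and> (\<forall>s\<in>F. c s \<in> K) \<and>
                        v = (\<Sum>s\<in>F. c s *s s)}"

definition pcone :: "'k::field set \<Rightarrow> 'k ^ 'n \<Rightarrow> ('k ^ 'n) set" where
  "pcone K x = {c *s x | c. c \<in> K \<and> c \<noteq> 0}"

definition is_point :: "'k::field set \<Rightarrow> ('k ^ 'n) set \<Rightarrow> bool" where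
  "is_point K S \<longleftrightarrow> (\<exists>x. x \<noteq> 0 \<and> (\<forall>i. x $ i \<in> K) \<and> S = pcone K x)"

definition real5 :: "nat \<Rightarrow> ('k::field ^ 5) set" where
  "real5 q = {v. v \<noteq> 0 \<and> (\<forall>i. v $ i \<in> Fq q)}"

definition Sigma_inf :: "nat \<Rightarrow> ('k::field ^ 5) set" where
  "Sigma_inf q = {v \<in> real5 q. v $ 5 = 0}"

type_synonym 'k qform = "'k \<times> 'k \<times> 'k \<times> 'k \<times> 'k \<times> 'k"

fun qf :: "'k::field qform \<Rightarrow> 'k \<Rightarrow> 'k \<Rightarrow> 'k \<Rightarrow> 'k" where
  "qf (a, b, c, f, g, h) x y z = a*x^2 + b*y^2 + c*z^2 + f*y*z + g*x*z + h*x*y"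

text \<open>Non-degeneracy (non-singularity) of a ternary quadratic form, valid in every
  characteristic: the half-determinant 4abc + fgh - af^2 - bg^2 - ch^2 is nonzero.\<close>
fun nondeg_qf :: "'k::field qform \<Rightarrow> bool" where
  "nondeg_qf (a, b, c, f, g, h) \<longleftrightarrow> 4*a*b*c + f*g*h - a*f^2 - b*g^2 - c*h^2 \<noteq> 0"

fun qf_over :: "'k::field set \<Rightarrow> 'k qform \<Rightarrow> bool" where
  "qf_over K (a, b, c, f, g, h) \<longleftrightarrow> a \<in> K \<and> b \<in> K \<and> c \<in> K \<and> f \<in> K \<and> g \<in> K \<and> h \<in> K"

definition qf3 :: "'k::field qform \<Rightarrow> 'k ^ 3 \<Rightarrow> 'k" where
  "qf3 F w = qf F (w $ 1) (w $ 2) (w $ 3)"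

text \<open>A Baer subplane is the image of PG(2,q) under an invertible matrix M.\<close>
definition baer_pts :: "nat \<Rightarrow> 'k::field ^ 3 ^ 3 \<Rightarrow> ('k ^ 3) set" where
  "baer_pts q M = {c *s (M *v w) | c w. c \<noteq> 0 \<and> w \<noteq> 0 \<and> (\<forall>i. w $ i \<in> Fq q)}"

text \<open>B is secant to l_inf: it contains two distinct points of l_inf (hence meets
  l_inf in a Baer subline).\<close>
definition baer_secant :: "nat \<Rightarrow> 'k::field ^ 3 ^ 3 \<Rightarrow> bool" where
  "baer_secant q M \<longleftrightarrow> (\<exists>X Y. X \<in> baer_pts q M \<and> Y \<in> baer_pts q M \<and>
       X $ 3 = 0 \<and> Y $ 3 = 0 \<and> pcone UNIV X \<noteq> pcone UNIV Y)"

definition Fq_conic_pts :: "nat \<Rightarrow> 'k::field ^ 3 ^ 3 \<Rightarrow> 'k qform \<Rightarrow> ('k ^ 3) set" where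
  "Fq_conic_pts q M F = {c *s (M *v w) | c w. c \<noteq> 0 \<and> w \<noteq> 0 \<and> (\<forall>i. w $ i \<in> Fq q) \<and> qf3 F w = 0}"

text \<open>C^+ : the F_{q^2}-conic containing it (same equation, over F_{q^2}).\<close>
definition Cplus_pts :: "'k::field ^ 3 ^ 3 \<Rightarrow> 'k qform \<Rightarrow> ('k ^ 3) set" where
  "Cplus_pts M F = {M *v w | w. w \<noteq> 0 \<and> qf3 F w = 0}"

text \<open>The point (x0 + x1 t, y0 + y1 t, z) of PG(2,q^2) associated with (x0,x1,y0,y1,z).\<close>
definition emb :: "'k::field \<Rightarrow> 'k ^ 5 \<Rightarrow> 'k ^ 3" where
  "emb t v = (\<chi> i. if i = 1 then v$1 + v$2 * t else if i = 2 then v$3 + v$4 * t else v$5)"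

text \<open>[X]: for an affine point X the point [X], for a point X of l_inf the spread
  line [X] (regular spread of Sigma_inf).\<close>
definition bb :: "nat \<Rightarrow> 'k::field \<Rightarrow> 'k ^ 3 \<Rightarrow> ('k ^ 5) set" where
  "bb q t X = {v \<in> real5 q. emb t v \<in> pcone UNIV X}"

definition bb_baer :: "nat \<Rightarrow> 'k::field \<Rightarrow> 'k ^ 3 ^ 3 \<Rightarrow> ('k ^ 5) set" where
  "bb_baer q t M = lspan (Fq q) (\<Union>{bb q t X | X. X \<in> baer_pts q M \<and> X $ 3 \<noteq> 0}) - {0}"

definition bb_sub :: "nat \<Rightarrow> 'k::field \<Rightarrow> 'k ^ 3 ^ 3 \<Rightarrow> ('k ^ 3) set \<Rightarrow> ('k ^ 5) set" where
  "bb_sub q t M C = \<Union>{bb q t X | X. X \<in> C \<and> X $ 3 \<noteq> 0}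
                  \<union> \<Union>{bb q t T \<inter> bb_baer q t M | T. T \<in> C \<and> T $ 3 = 0}"

text \<open>[O] for an F_{q^2}-conic O with equation f: the intersection of the quadrics
  f_inf = 0, f_0 = 0 where f(x0 + x1 t, y0 + y1 t, z) = f_inf + t f_0; for a
  point of PG(4,q) this says exactly that f vanishes at emb t v.\<close>
definition bb_conic :: "nat \<Rightarrow> 'k::field \<Rightarrow> ('k ^ 3 \<Rightarrow> 'k) \<Rightarrow> ('k ^ 5) set" where
  "bb_conic q t f = {v \<in> real5 q. f (emb t v) = 0}"

text \<open>The transversal g of the regular spread in PG(4,q^2) (g^q is its conjugate).\<close>
definition gline :: "nat \<Rightarrow> 'k::field \<Rightarrow> ('k ^ 5) set" where
  "gline q t = {w. w \<noteq> 0 \<and> w $ 5 = 0 \<and> w $ 1 + t ^ q * w $ 2 = 0 \<and> w $ 3 + t ^ q * w $ 4 = 0}"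

definition ext :: "('k::field ^ 5) set \<Rightarrow> ('k ^ 5) set" where
  "ext S = lspan UNIV S - {0}"

definition gpt :: "nat \<Rightarrow> 'k::field \<Rightarrow> 'k ^ 3 \<Rightarrow> ('k ^ 5) set" where
  "gpt q t T = ext (bb q t T) \<inter> gline q t"

definition join :: "('k::field ^ 5) set \<Rightarrow> ('k ^ 5) set \<Rightarrow> ('k ^ 5) set" where
  "join S1 S2 = lspan UNIV (S1 \<union> S2) - {0}"

definition Fq_indep3 :: "nat \<Rightarrow> 'k::field ^ 5 \<Rightarrow> 'k ^ 5 \<Rightarrow> 'k ^ 5 \<Rightarrow> bool" where
  "Fq_indep3 q u v w \<longleftrightarrow> (\<forall>a b c. a \<in> Fq q \<and> b \<in> Fq q \<and> c \<in> Fq q \<and>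
       a *s u + b *s v + c *s w = 0 \<longrightarrow> a = 0 \<and> b = 0 \<and> c = 0)"

definition conic_on :: "'k::field set \<Rightarrow> 'k ^ 5 \<Rightarrow> 'k ^ 5 \<Rightarrow> 'k ^ 5 \<Rightarrow> 'k qform \<Rightarrow> ('k ^ 5) set" where
  "conic_on K u v w F = {a *s u + b *s v + c *s w | a b c.
       a \<in> K \<and> b \<in> K \<and> c \<in> K \<and> (a, b, c) \<noteq> (0, 0, 0) \<and> qf F a b c = 0}"

definition plane_pts :: "nat \<Rightarrow> 'k::field ^ 5 \<Rightarrow> 'k ^ 5 \<Rightarrow> 'k ^ 5 \<Rightarrow> ('k ^ 5) set" where
  "plane_pts q u v w = {a *s u + b *s v + c *s w | a b c.
       a \<in> Fq q \<and> b \<in> Fq q \<and> c \<in> Fq q \<and> (a, b, c) \<noteq> (0, 0, 0)}"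

definition conic_rep :: "nat \<Rightarrow> ('k::field ^ 5) set \<Rightarrow> 'k ^ 5 \<Rightarrow> 'k ^ 5 \<Rightarrow> 'k ^ 5 \<Rightarrow> 'k qform \<Rightarrow> bool" where
  "conic_rep q N u v w F \<longleftrightarrow> u \<in> real5 q \<and> v \<in> real5 q \<and> w \<in> real5 q \<and> Fq_indep3 q u v w \<and>
       qf_over (Fq q) F \<and> nondeg_qf F \<and> N = conic_on (Fq q) u v w F"

definition nondeg_conic_in_plane :: "nat \<Rightarrow> ('k::field ^ 5) set \<Rightarrow> ('k ^ 5) set \<Rightarrow> bool" where
  "nondeg_conic_in_plane q N Pl \<longleftrightarrow>
     (\<exists>u v w F. conic_rep q N u v w F \<and> Pl = plane_pts q u v w)"

text \<open>N is (PQ^q)-special: N^* contains one point of the line P Q^q and one point of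
  the line P^q Q (P, Q points of g, given as punctured 1-spaces).\<close>
definition special :: "nat \<Rightarrow> ('k::field ^ 5) set \<Rightarrow> ('k ^ 5) set \<Rightarrow> ('k ^ 5) set \<Rightarrow> bool" where
  "special q P Q N \<longleftrightarrow> (\<exists>u v w F. conic_rep q N u v w F \<and>
       is_point UNIV (conic_on UNIV u v w F \<inter> join P (conjv q ` Q)) \<and>
       is_point UNIV (conic_on UNIV u v w F \<inter> join (conjv q ` P) Q))"

end

theory Submission
  imports "HOL-Algebra.Sylow" "HOL-Algebra.Multiplicative_Group" "HOL-Analysis.Cartesian_Space"
    "HOL-Computational_Algebra.Polynomial" "HOL-Computational_Algebra.Primes" Defs
    (* imported after HOL-Algebra, so that join, coeff and monom are not shadowed by the
       lattice and univariate-polynomial constants of HOL-Algebra *)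
begin

text \<open>
  Write the Baer subplane B as the image of PG(2,q) under M. Since B contains two points of
  l_inf, the third row of M is a multiple lam of a GF(q)-rational vector; after dividing by lam
  the columns of M have GF(q)-rational Bruck--Bose preimages, and w \<mapsto> \<Sigma> w_j bvec j
  identifies PG(2,q) with the plane [B]. Under this identification [C] is the conic F = 0
  of [B], and [C^+] \<inter> \<Sigma>_inf is the hypothesis on C^+ \<inter> l_inf read through emb.
  The Baer involution X \<mapsto> M (M^-1 X)^q of B preserves C^+ and l_inf, so it fixes or swaps
  P and Q; its fixed points lie in B (Hilbert 90), which settles the tangent case, and
  when P, Q \<notin> B it swaps them. In that case the point of [C]^* with B-coordinates
  M^-1 P is sent by emb to P and by the conjugate map emb (t^q) to a multiple of Q^q, so it
  lies on the line P Q^q, and it is the only point of [C]^* there.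
\<close>

section \<open>Finite fields\<close>

lemma prime_CHAR_finite_field: "prime CHAR('k::{finite,field})"
  by (rule prime_CHAR_semidom) (simp add: finite_imp_CHAR_pos)

lemma finite_field_power_CARD:
  fixes x :: "'k::{finite,field}"
  shows "x ^ CARD('k) = x"
proof (cases "x = 0")
  case False
  define G where "G = \<lparr>carrier = UNIV - {0::'k}, monoid.mult = (*), one = 1 :: 'k\<rparr>"
  interpret group G
  proof (rule groupI)
    show "\<exists>y\<in>carrier G. y \<otimes>\<^bsub>G\<^esub> x = \<one>\<^bsub>G\<^esub>" if "x \<in> carrier G" for x
      using that by (intro bexI[of _ "inverse x"]) (auto simp: G_def)
  qed (auto simp: G_def mult.assoc)
  have pow: "y [^]\<^bsub>G\<^esub> n = y ^ n" for y :: 'k and n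
    by (induction n) (simp_all add: G_def)
  have "x ^ Coset.order G = 1"
    using pow_order_eq_1[of x] False unfolding pow by (simp add: G_def)
  then have "x ^ (CARD('k) - 1) = 1"
    by (simp add: Coset.order_def G_def card_Diff_singleton)
  moreover have "x * x ^ (CARD('k) - 1) = x ^ CARD('k)"
    using finite_UNIV_card_ge_0[where 'a='k] by (simp flip: power_Suc)
  ultimately show ?thesis
    by simp
qed simp

text \<open>A Sylow subgroup of order r of the additive group contains some x \<noteq> 0 with r x = 0.\<close>
lemma prime_dvd_CARD_imp_eq_CHAR:
  assumes r: "prime r" "r dvd CARD('k::{finite,field})"
  shows "r = CHAR('k)"
proof -
  define G where "G = \<lparr>carrier = UNIV :: 'k set, monoid.mult = (+), one = 0 :: 'k\<rparr>"
  interpret group G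
  proof (rule groupI)
    show "\<exists>y\<in>carrier G. y \<otimes>\<^bsub>G\<^esub> x = \<one>\<^bsub>G\<^esub>" if "x \<in> carrier G" for x
      by (intro bexI[of _ "- x"]) (auto simp: G_def)
  qed (auto simp: G_def add.assoc)
  obtain m where "CARD('k) = r * m"
    using r(2) by (rule dvdE)
  then have m: "Coset.order G = r ^ 1 * m"
    by (simp add: Coset.order_def G_def)
  have "finite (carrier G)"
    by (simp add: G_def)
  then obtain H where H: "subgroup H G" "card H = r ^ 1"
    using sylow_thm[OF r(1) is_group m] by blast
  have "\<not> H \<subseteq> {0}"
    using H(2) card_mono[of "{0::'k}" H] prime_gt_1_nat[OF r(1)] by auto
  then obtain x where x: "x \<in> H" "x \<noteq> 0"
    by blast
  interpret H: group "G\<lparr>carrier := H\<rparr>"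
    using subgroup.subgroup_is_group[OF H(1) is_group] .
  have pow: "y [^]\<^bsub>G\<lparr>carrier := H\<rparr>\<^esub> n = of_nat n * y" for y :: 'k and n
    by (induction n) (simp_all add: G_def algebra_simps)
  have "of_nat r * x = 0"
    using H.pow_order_eq_1[of x] x H(2) unfolding pow by (simp add: Coset.order_def G_def)
  then have "CHAR('k) dvd r"
    using x(2) by (simp add: of_nat_eq_0_iff_char_dvd)
  then show ?thesis
    using primes_dvd_imp_eq[OF prime_CHAR_finite_field[where 'k='k] r(1)] by simp
qed

lemma eq_prime_power_if_unique_prime_divisor:
  fixes n p :: nat
  assumes "prime p" "n > 0" and "\<And>r. prime r \<Longrightarrow> r dvd n \<Longrightarrow> r = p"
  shows "n = p ^ multiplicity p n"
proof -
  have "n \<noteq> 0" "\<not> is_unit p"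
    using assms(1,2) by auto
  then obtain y where y: "n = p ^ multiplicity p n * y" "\<not> p dvd y"
    by (rule multiplicity_decompose')
  have "y = 1"
  proof (rule ccontr)
    assume "y \<noteq> 1"
    then obtain r where "prime r" "r dvd y"
      using prime_factor_nat by blast
    then show False
      using assms(3)[of r] y by (metis dvd_mult)
  qed
  then show ?thesis
    using y(1) by simp
qed

lemma dvd_CARD_imp_CHAR_power:
  assumes "(m::nat) dvd CARD('k::{finite,field})"
  shows "\<exists>i. m = CHAR('k) ^ i"
proof -
  have "m > 0"
    using assms finite_UNIV_card_ge_0[where 'a='k] by (auto intro: gr0I)
  moreover have "r = CHAR('k)" if "prime r" "r dvd m" for r
    using that assms prime_dvd_CARD_imp_eq_CHAR dvd_trans by blast
  ultimately show ?thesis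
    using eq_prime_power_if_unique_prime_divisor[of "CHAR('k)" m] prime_CHAR_finite_field
    by blast
qed

lemma exhaust_5:
  fixes x :: 5
  shows "x = 1 \<or> x = 2 \<or> x = 3 \<or> x = 4 \<or> x = 5"
proof (induct x)
  case (of_int z)
  then have "z = 0 \<or> z = 1 \<or> z = 2 \<or> z = 3 \<or> z = 4"
    by fastforce
  then show ?case
    by auto
qed

lemma forall_5: "(\<forall>i::5. P i) \<longleftrightarrow> P 1 \<and> P 2 \<and> P 3 \<and> P 4 \<and> P 5"
  by (metis exhaust_5)

lemma vec_eq_iff_3: "(v::'a^3) = w \<longleftrightarrow> v$1 = w$1 \<and> v$2 = w$2 \<and> v$3 = w$3"
  by (simp add: vec_eq_iff forall_3)

lemma vec_eq_iff_5:
  "(v::'a^5) = w \<longleftrightarrow> v$1 = w$1 \<and> v$2 = w$2 \<and> v$3 = w$3 \<and> v$4 = w$4 \<and> v$5 = w$5"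
  by (simp add: vec_eq_iff forall_5)

lemma vector_5 [simp]:
  "(vector [a, b, c, d, e] :: ('a::zero)^5) $ 1 = a"
  "(vector [a, b, c, d, e] :: ('a::zero)^5) $ 2 = b"
  "(vector [a, b, c, d, e] :: ('a::zero)^5) $ 3 = c"
  "(vector [a, b, c, d, e] :: ('a::zero)^5) $ 4 = d"
  "(vector [a, b, c, d, e] :: ('a::zero)^5) $ 5 = e"
  unfolding vector_def by simp_all

lemma vector_3_eq_0_iff: "(vector [a, b, c] :: ('a::zero)^3) = 0 \<longleftrightarrow> (a, b, c) = (0, 0, 0)"
  by (simp add: vec_eq_iff_3)

definition dot3 :: "'a::comm_semiring_1 ^ 3 \<Rightarrow> 'a ^ 3 \<Rightarrow> 'a" where
  "dot3 m w = m$1 * w$1 + m$2 * w$2 + m$3 * w$3"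

definition cross3 :: "'a::comm_ring ^ 3 \<Rightarrow> 'a ^ 3 \<Rightarrow> 'a ^ 3" where
  "cross3 v w = vector [v$2 * w$3 - v$3 * w$2, v$3 * w$1 - v$1 * w$3, v$1 * w$2 - v$2 * w$1]"

lemma matrix_vector_mult_component_3: "((M::'a::comm_semiring_1^3^'m) *v w) $ i = dot3 (M $ i) w"
  by (simp add: matrix_vector_mult_def sum_3 dot3_def)

lemma dot3_add_right: "dot3 m (v + w) = dot3 m v + dot3 m w"
  by (simp add: dot3_def algebra_simps)

lemma smult_eq_if_minors_vanish:
  fixes x y :: "'a::field ^ 'n"
  assumes "\<And>a b. x$a * y$b = x$b * y$a" "x$i \<noteq> 0"
  shows "y = (y$i / x$i) *s x"
  unfolding vec_eq_iff
proof
  fix j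
  have "x$i * y$j = x$j * y$i"
    by (rule assms(1))
  then show "y$j = ((y$i / x$i) *s x)$j"
    using assms(2) by (simp add: field_simps)
qed

lemma minors_vanish_3:
  fixes x y :: "'a::comm_ring ^ 3"
  assumes "x$1 * y$2 = x$2 * y$1" "x$1 * y$3 = x$3 * y$1" "x$2 * y$3 = x$3 * y$2"
  shows "x$a * y$b = x$b * y$a"
  using exhaust_3[of a] exhaust_3[of b] assms by (auto simp: mult.commute)

lemma cross3_eq_0_imp_parallel:
  fixes v w :: "'a::field ^ 3"
  assumes "v \<noteq> 0" "cross3 v w = 0"
  shows "\<exists>s. w = s *s v"
proof -
  have "v$1 * w$2 = v$2 * w$1" "v$1 * w$3 = v$3 * w$1" "v$2 * w$3 = v$3 * w$2"
    using assms(2) by (simp_all add: cross3_def vec_eq_iff_3)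
  then have minors: "v$a * w$b = v$b * w$a" for a b
    by (rule minors_vanish_3)
  obtain i where "v$i \<noteq> 0"
    using assms(1) by (auto simp: vec_eq_iff)
  then show ?thesis
    using smult_eq_if_minors_vanish[OF minors] by blast
qed

lemma dot3_eq_0_imp_parallel_cross3:
  fixes m v w :: "'a::field ^ 3"
  assumes "dot3 m v = 0" "dot3 m w = 0" "cross3 v w \<noteq> 0"
  shows "\<exists>c. m = c *s cross3 v w"
proof -
  define n where "n = cross3 v w"
  have "n$1 * m$2 - n$2 * m$1 = w$3 * dot3 m v - v$3 * dot3 m w"
    "n$1 * m$3 - n$3 * m$1 = v$2 * dot3 m w - w$2 * dot3 m v"
    "n$2 * m$3 - n$3 * m$2 = w$1 * dot3 m v - v$1 * dot3 m w"
    by (simp_all add: n_def cross3_def dot3_def algebra_simps)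
  then have "n$1 * m$2 = n$2 * m$1" "n$1 * m$3 = n$3 * m$1" "n$2 * m$3 = n$3 * m$2"
    using assms(1,2) by simp_all
  then have "n$a * m$b = n$b * m$a" for a b
    by (rule minors_vanish_3)
  moreover obtain i where "n$i \<noteq> 0"
    using assms(3) by (auto simp: n_def vec_eq_iff)
  ultimately show ?thesis
    unfolding n_def using smult_eq_if_minors_vanish by blast
qed

lemma qf3_smult: "qf3 F (c *s w) = c ^ 2 * qf3 F w"
  by (cases F) (simp add: qf3_def power_mult_distrib algebra_simps power2_eq_square)

lemma invertible_matrix_inv:
  fixes M :: "'a::comm_semiring_1 ^ 'n ^ 'n"
  assumes "invertible M"
  shows "matrix_inv M *v (M *v w) = w" "M *v (matrix_inv M *v X) = X"
proof -
  have "M ** matrix_inv M = mat 1 \<and> matrix_inv M ** M = mat 1"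
    using assms unfolding invertible_def matrix_inv_def by (rule someI_ex)
  then show "matrix_inv M *v (M *v w) = w" "M *v (matrix_inv M *v X) = X"
    by (simp_all add: matrix_vector_mul_assoc)
qed

lemma lspan_induct [consumes 1, case_names zero add smult base]:
  assumes "v \<in> lspan K S"
    and "Pr 0"
    and "\<And>x y. Pr x \<Longrightarrow> Pr y \<Longrightarrow> Pr (x + y)"
    and "\<And>c x. c \<in> K \<Longrightarrow> Pr x \<Longrightarrow> Pr (c *s x)"
    and "\<And>s. s \<in> S \<Longrightarrow> Pr s"
  shows "Pr v"
proof -
  obtain F c where F: "finite F" "F \<subseteq> S" "\<forall>s\<in>F. c s \<in> K" and v: "v = (\<Sum>s\<in>F. c s *s s)"
    using assms(1) unfolding lspan_def by blast
  have "Pr (\<Sum>s\<in>F. c s *s s)"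
    using F
  proof (induction F rule: finite_induct)
    case (insert s F)
    then show ?case
      by (simp add: assms(3-5))
  qed (simp add: assms(2))
  then show ?thesis
    using v by simp
qed

lemma lspan_superset: "s \<in> S \<Longrightarrow> 1 \<in> K \<Longrightarrow> s \<in> lspan K S"
  unfolding lspan_def by (intro CollectI exI[of _ "{s}"] exI[of _ "\<lambda>_. 1"]) simp

lemma lspan_lincomb2:
  assumes "s1 \<in> S" "s2 \<in> S" "s1 \<noteq> s2" "a \<in> K" "b \<in> K"
  shows "a *s s1 + b *s s2 \<in> lspan K S"
  unfolding lspan_def
  by (intro CollectI exI[of _ "{s1, s2}"] exI[of _ "\<lambda>s. if s = s1 then a else b"])
     (use assms in auto)

lemma mem_pcone_UNIV_iff: "Y \<in> pcone UNIV X \<longleftrightarrow> (\<exists>c. c \<noteq> 0 \<and> Y = c *s X)"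
  by (auto simp: pcone_def)

lemma smult_mem_pcone_UNIV: "(c::'a::field) \<noteq> 0 \<Longrightarrow> c *s X \<in> pcone UNIV X"
  unfolding pcone_def by blast

lemma self_mem_pcone_UNIV: "(X::'a::field^'n) \<in> pcone UNIV X"
  using smult_mem_pcone_UNIV[of 1 X] by simp

lemma pcone_UNIV_smult:
  fixes X :: "'a::field ^ 'n"
  assumes "d \<noteq> 0"
  shows "pcone UNIV (d *s X) = pcone UNIV X"
proof -
  have "c *s (d *s X) \<in> pcone UNIV X" if "c \<noteq> 0" for c
    using that assms by (simp add: vector_smult_assoc smult_mem_pcone_UNIV)
  moreover have "c *s X \<in> pcone UNIV (d *s X)" if "c \<noteq> 0" for c
    using that assms smult_mem_pcone_UNIV[of "c / d" "d *s X"] by (simp add: vector_smult_assoc)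
  ultimately show ?thesis
    by (auto simp: mem_pcone_UNIV_iff)
qed

section \<open>The Bruck--Bose map\<close>

lemma emb_component [simp]:
  "emb t v $ 1 = v$1 + v$2 * t" "emb t v $ 2 = v$3 + v$4 * t" "emb t v $ 3 = v$5"
  by (simp_all add: emb_def)

lemma emb_add: "emb t (v + w) = emb t v + emb t w"
  by (simp add: vec_eq_iff_3 algebra_simps)

lemma emb_diff: "emb t (v - w) = emb t v - emb t w"
  by (simp add: vec_eq_iff_3 algebra_simps)

lemma emb_smult: "emb t (c *s v) = c *s emb t v"
  by (simp add: vec_eq_iff_3 algebra_simps)

lemma emb_0 [simp]: "emb t 0 = 0"
  by (simp add: vec_eq_iff_3)

lemma emb_pair_inj:
  assumes "s \<noteq> t" "emb s v = emb s w" "emb t v = emb t w"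
  shows "v = w"
proof -
  have e: "v$1 + v$2 * s = w$1 + w$2 * s" "v$1 + v$2 * t = w$1 + w$2 * t"
    "v$3 + v$4 * s = w$3 + w$4 * s" "v$3 + v$4 * t = w$3 + w$4 * t" "v$5 = w$5"
    using assms(2,3) by (simp_all add: vec_eq_iff_3)
  have "(v$2 - w$2) * (s - t) = ((v$1 + v$2 * s) - (w$1 + w$2 * s)) - ((v$1 + v$2 * t) - (w$1 + w$2 * t))"
    "(v$4 - w$4) * (s - t) = ((v$3 + v$4 * s) - (w$3 + w$4 * s)) - ((v$3 + v$4 * t) - (w$3 + w$4 * t))"
    by (simp_all add: algebra_simps)
  then have "(v$2 - w$2) * (s - t) = 0" "(v$4 - w$4) * (s - t) = 0"
    by (simp_all only: e diff_self diff_zero)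
  then have "v$2 = w$2" "v$4 = w$4"
    using assms(1) by simp_all
  then show ?thesis
    using e by (simp add: vec_eq_iff_5)
qed

section \<open>The quadratic extension GF(q^2) of GF(q)\<close>

locale bruck_bose =
  fixes q :: nat and t :: "'k::{finite,field}"
  assumes card: "CARD('k) = q ^ 2" and prim: "primitive_elt t"
begin

lemma q_ge_2: "q \<ge> 2"
proof -
  have "2 \<le> CARD('k)"
    using card_mono[of "UNIV::'k set" "{0, 1}"] by simp
  then show ?thesis
    using card by (cases q) (auto simp: power2_eq_square, simp add: Suc_le_eq)
qed

lemma frob_add: "((x::'k) + y) ^ q = x ^ q + y ^ q"
proof -
  have "q dvd CARD('k)"
    using card by (simp add: power2_eq_square)
  then obtain i where "q = CHAR('k) ^ i"
    using dvd_CARD_imp_CHAR_power by blast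
  then show ?thesis
    using freshmans_dream'[OF prime_CHAR_finite_field] by blast
qed

lemma frob_frob [simp]: "((x::'k) ^ q) ^ q = x"
  using finite_field_power_CARD[of x] card by (simp add: power2_eq_square power_mult)

lemma frob_0 [simp]: "(0::'k) ^ q = 0"
  using q_ge_2 by simp

lemma frob_minus: "(- (x::'k)) ^ q = - (x ^ q)"
  using frob_add[of x "- x"] by (simp add: eq_neg_iff_add_eq_0 add.commute)

lemma frob_diff: "((x::'k) - y) ^ q = x ^ q - y ^ q"
  using frob_add[of x "- y"] by (simp add: frob_minus)

lemma Fq_iff: "x \<in> Fq q \<longleftrightarrow> x ^ q = x"
  by (simp add: Fq_def)

lemma Fq_0 [simp]: "(0::'k) \<in> Fq q" and Fq_1 [simp]: "(1::'k) \<in> Fq q"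
  by (simp_all add: Fq_iff)

lemma Fq_minus [simp]: "(x::'k) \<in> Fq q \<Longrightarrow> - x \<in> Fq q"
  by (simp add: Fq_iff frob_minus)

lemma Fq_closed [simp]:
  fixes x y :: 'k
  assumes "x \<in> Fq q" "y \<in> Fq q"
  shows "x + y \<in> Fq q" "x - y \<in> Fq q" "x * y \<in> Fq q" "x / y \<in> Fq q"
  using assms by (simp_all add: Fq_iff frob_add frob_diff power_mult_distrib power_divide)

lemma Fq_power [simp]: "(x::'k) \<in> Fq q \<Longrightarrow> x ^ n \<in> Fq q"
  by (induction n) simp_all

lemma card_Fq_le: "card (Fq q :: 'k set) \<le> q"
proof -
  define p :: "'k poly" where "p = monom 1 q - monom 1 1"
  have "coeff p q = 1"
    using q_ge_2 by (simp add: p_def coeff_monom)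
  then have "p \<noteq> 0"
    by auto
  moreover have "degree p \<le> q"
    unfolding p_def using q_ge_2 degree_monom_le[of "1::'k" q] degree_monom_le[of "1::'k" 1]
    by (intro degree_diff_le) auto
  moreover have "Fq q = {x. poly p x = 0}"
    by (simp add: p_def Fq_def poly_monom)
  ultimately show ?thesis
    using card_poly_roots_bound[of p] by simp
qed

lemma t_notin_Fq: "t \<notin> Fq q"
proof
  assume "t \<in> Fq q"
  then have "y \<in> Fq q" for y :: 'k
    using prim unfolding primitive_elt_def by (cases "y = 0") auto
  then have "UNIV \<subseteq> (Fq q :: 'k set)"
    by blast
  then have "q * q \<le> card (Fq q :: 'k set)"
    using card card_mono[of "Fq q" "UNIV :: 'k set"] by (simp add: power2_eq_square)
  then show False
    using card_Fq_le mult_le_mono1[OF q_ge_2, of q] q_ge_2 by linarith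
qed

lemma t_frob_ne: "t ^ q \<noteq> t"
  using t_notin_Fq by (simp add: Fq_iff)

text \<open>Coordinates of z with respect to the GF(q)-basis 1, t of GF(q^2).\<close>
definition im :: "'k \<Rightarrow> 'k" where "im z = (z - z ^ q) / (t - t ^ q)"
definition re :: "'k \<Rightarrow> 'k" where "re z = z - im z * t"

lemma im_Fq [simp]: "im z \<in> Fq q"
proof -
  have "(im z) ^ q = (z ^ q - z) / (t ^ q - t)"
    by (simp add: im_def power_divide frob_diff)
  also have "\<dots> = im z"
    unfolding im_def by (metis minus_diff_eq minus_divide_divide)
  finally show ?thesis
    by (simp add: Fq_iff)
qed

lemma re_Fq [simp]: "re z \<in> Fq q"
proof -
  have "im z * (t - t ^ q) = z - z ^ q"
    using t_frob_ne by (simp add: im_def)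
  then have "z ^ q - im z * t ^ q = re z"
    by (simp add: re_def algebra_simps)
  moreover have "(re z) ^ q = z ^ q - im z * t ^ q"
    using im_Fq[of z] by (simp add: re_def frob_diff power_mult_distrib Fq_iff)
  ultimately show ?thesis
    by (simp add: Fq_iff)
qed

lemma re_im: "re z + im z * t = z"
  by (simp add: re_def)

lemma Fq_coords_unique:
  assumes "a \<in> Fq q" "b \<in> Fq q" "a' \<in> Fq q" "b' \<in> Fq q" "a + b * t = a' + b' * t"
  shows "a = a'" "b = b'"
proof -
  have "b = b'"
  proof (rule ccontr)
    assume "b \<noteq> b'"
    then have "t = (a' - a) / (b - b')"
      using assms(5) by (simp add: field_simps)
    then show False
      using assms(1-4) t_notin_Fq by simp
  qed
  then show "a = a'" "b = b'"
    using assms(5) by simp_all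
qed

definition real_vec :: "'k ^ 'n \<Rightarrow> bool" where
  "real_vec v \<longleftrightarrow> (\<forall>i. v $ i \<in> Fq q)"

lemma real_vec_0 [simp]: "real_vec 0"
  by (simp add: real_vec_def)

lemma real_vec_add: "real_vec v \<Longrightarrow> real_vec w \<Longrightarrow> real_vec (v + w)"
  by (simp add: real_vec_def)

lemma real_vec_diff: "real_vec v \<Longrightarrow> real_vec w \<Longrightarrow> real_vec (v - w)"
  by (simp add: real_vec_def)

lemma real_vec_smult: "c \<in> Fq q \<Longrightarrow> real_vec v \<Longrightarrow> real_vec (c *s v)"
  by (simp add: real_vec_def)

lemma real_vec_iff_conjv: "real_vec v \<longleftrightarrow> conjv q v = v"
  by (simp add: real_vec_def vec_eq_iff Fq_iff conjv_def)

lemma mem_real5_iff: "v \<in> real5 q \<longleftrightarrow> v \<noteq> 0 \<and> real_vec v"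
  by (simp add: real5_def real_vec_def)

lemma conjv_component [simp]: "conjv q v $ i = (v $ i) ^ q"
  by (simp add: conjv_def)

lemma conjv_add: "conjv q ((v::'k^'n) + w) = conjv q v + conjv q w"
  by (simp add: vec_eq_iff frob_add)

lemma conjv_smult: "conjv q (c *s (v::'k^'n)) = c ^ q *s conjv q v"
  by (simp add: vec_eq_iff power_mult_distrib)

lemma conjv_conjv [simp]: "conjv q (conjv q (v::'k^'n)) = v"
  by (simp add: vec_eq_iff)

lemma conjv_0 [simp]: "conjv q (0::'k^'n) = 0"
  by (simp add: vec_eq_iff)

lemma conjv_eq_0_iff [simp]: "conjv q (v::'k^'n) = 0 \<longleftrightarrow> v = 0"
  by (metis conjv_conjv conjv_0)

lemma emb_real_eq_0:
  assumes "real_vec v" "emb t v = 0"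
  shows "v = 0"
proof -
  have "v$1 + v$2 * t = 0 + 0 * t" "v$3 + v$4 * t = 0 + 0 * t" "v$5 = 0"
    using assms(2) by (simp_all add: vec_eq_iff_3)
  then have "v$1 = 0" "v$2 = 0" "v$3 = 0" "v$4 = 0" "v$5 = 0"
    using assms(1) Fq_coords_unique[of "v$1" "v$2" 0 0] Fq_coords_unique[of "v$3" "v$4" 0 0]
    by (simp_all add: real_vec_def)
  then show ?thesis
    by (simp add: vec_eq_iff_5)
qed

lemma emb_real_inj: "real_vec v \<Longrightarrow> real_vec w \<Longrightarrow> emb t v = emb t w \<Longrightarrow> v = w"
  using emb_real_eq_0[of "v - w"] by (simp add: real_vec_diff emb_diff)

text \<open>emb (t^q) is the conjugate of the Bruck--Bose map: on PG(4,q^2) the line g is its kernel.\<close>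
lemma emb_frob_real: "real_vec v \<Longrightarrow> emb (t ^ q) v = conjv q (emb t v)"
  by (simp add: real_vec_def vec_eq_iff_3 frob_add power_mult_distrib Fq_iff)

lemma emb_conjv: "emb t (conjv q v) = conjv q (emb (t ^ q) v)"
  by (simp add: vec_eq_iff_3 frob_add power_mult_distrib)

lemma emb_frob_conjv: "emb (t ^ q) (conjv q v) = conjv q (emb t v)"
  by (simp add: vec_eq_iff_3 frob_add power_mult_distrib)

lemma mem_gline_iff: "w \<in> gline q t \<longleftrightarrow> w \<noteq> 0 \<and> emb (t ^ q) w = 0"
  by (auto simp: gline_def vec_eq_iff_3 mult.commute)

lemma qf_frob:
  fixes x y z :: 'k
  assumes "qf_over (Fq q) F"
  shows "(qf F x y z) ^ q = qf F (x ^ q) (y ^ q) (z ^ q)"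
proof -
  obtain a b c f g h where F: "F = (a, b, c, f, g, h)"
    by (cases F)
  have coeffs: "a ^ q = a" "b ^ q = b" "c ^ q = c" "f ^ q = f" "g ^ q = g" "h ^ q = h"
    using assms F by (simp_all add: Fq_iff)
  have sq: "(u ^ 2) ^ q = (u ^ q) ^ 2" for u :: 'k
    by (metis mult.commute power_mult)
  show ?thesis
    unfolding F qf.simps by (simp only: frob_add power_mult_distrib coeffs sq)
qed

lemma qf3_conjv:
  fixes w :: "'k ^ 3"
  assumes "qf_over (Fq q) F"
  shows "qf3 F (conjv q w) = (qf3 F w) ^ q"
  unfolding qf3_def conjv_component by (rule qf_frob[OF assms, symmetric])

text \<open>A form of Hilbert's Theorem 90.\<close>
lemma conjv_eq_smult_imp_real_multiple:
  fixes w :: "'k ^ 'n"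
  assumes "w \<noteq> 0" "conjv q w = e *s w"
  obtains r d where "real_vec r" "d \<noteq> 0" "w = d *s r"
proof -
  obtain i where i: "w $ i \<noteq> 0"
    using assms(1) by (auto simp: vec_eq_iff)
  define r where "r = (1 / w $ i) *s w"
  have wi: "(w $ i) ^ q = e * w $ i"
    using arg_cong[OF assms(2), of "\<lambda>v. v $ i"] by simp
  then have "e \<noteq> 0"
    using i by auto
  with wi have "(1 / w $ i) ^ q * e = 1 / w $ i"
    using i by (simp add: power_one_over field_simps)
  then have "conjv q r = r"
    by (simp add: r_def conjv_smult assms(2) vector_smult_assoc)
  moreover have "w = w $ i *s r"
    using i by (simp add: r_def vector_smult_assoc)
  ultimately show thesis
    using that i by (simp add: real_vec_iff_conjv)
qed

text \<open>The GF(q)-rational preimage of X under emb t, provided X$3 lies in GF(q).\<close>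
definition rep :: "'k ^ 3 \<Rightarrow> 'k ^ 5" where
  "rep X = vector [re (X$1), im (X$1), re (X$2), im (X$2), X$3]"

lemma emb_rep [simp]: "emb t (rep X) = X"
  by (simp add: rep_def vec_eq_iff_3 re_im)

lemma real_vec_rep: "X$3 \<in> Fq q \<Longrightarrow> real_vec (rep X)"
  by (simp add: rep_def real_vec_def forall_5)

text \<open>The point a is a GF(q^2)-combination of the two rational points rep X and rep (t X)
  of the spread line [X].\<close>
lemma spread_line_ext_point:
  assumes "X \<noteq> 0" "X$3 = 0"
  obtains a where "a \<in> lspan UNIV (bb q t X)" "emb (t ^ q) a = 0" "emb t a = c *s X"
proof -
  have t0: "t \<noteq> 0"
    using t_notin_Fq by auto
  have real: "real_vec (rep X)" "real_vec (rep (t *s X))"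
    using assms(2) by (simp_all add: real_vec_rep)
  have "t *s X \<noteq> 0"
    using assms(1) t0 by simp
  then have in_bb: "rep X \<in> bb q t X" "rep (t *s X) \<in> bb q t X"
    using real assms(1) t0 smult_mem_pcone_UNIV self_mem_pcone_UNIV
    by (auto simp: bb_def mem_real5_iff dest: arg_cong[where f = "emb t"])
  have "rep X \<noteq> rep (t *s X)"
  proof
    assume "rep X = rep (t *s X)"
    then have "X = t *s X"
      by (metis emb_rep)
    moreover obtain i where "X$i \<noteq> 0"
      using assms(1) by (auto simp: vec_eq_iff)
    ultimately have "t = 1"
      by (metis mult_cancel_right1 vector_smult_component)
    then show False
      using t_notin_Fq by simp
  qed
  define \<beta> where "\<beta> = c / (t - t ^ q)"
  define \<alpha> where "\<alpha> = - \<beta> * t ^ q"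
  have "\<alpha> + \<beta> * t = \<beta> * (t - t ^ q)"
    by (simp add: \<alpha>_def algebra_simps)
  then have coeffs: "\<alpha> + \<beta> * t = c" "\<alpha> + \<beta> * t ^ q = 0"
    using t_frob_ne by (simp_all add: \<alpha>_def \<beta>_def)
  show thesis
  proof
    show "\<alpha> *s rep X + \<beta> *s rep (t *s X) \<in> lspan UNIV (bb q t X)"
      using in_bb \<open>rep X \<noteq> rep (t *s X)\<close> by (intro lspan_lincomb2) auto
    have "emb (t ^ q) (\<alpha> *s rep X + \<beta> *s rep (t *s X)) = (\<alpha> + \<beta> * t ^ q) *s conjv q X"
      by (simp add: emb_add emb_smult emb_frob_real real conjv_smult vec_eq_iff algebra_simps)
    then show "emb (t ^ q) (\<alpha> *s rep X + \<beta> *s rep (t *s X)) = 0"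
      using coeffs by simp
    have "emb t (\<alpha> *s rep X + \<beta> *s rep (t *s X)) = (\<alpha> + \<beta> * t) *s X"
      by (simp add: emb_add emb_smult vec_eq_iff algebra_simps)
    then show "emb t (\<alpha> *s rep X + \<beta> *s rep (t *s X)) = c *s X"
      using coeffs by simp
  qed
qed

lemma mem_gpt_iff:
  assumes "X \<noteq> 0" "X$3 = 0"
  shows "a \<in> gpt q t X \<longleftrightarrow> a \<noteq> 0 \<and> emb (t ^ q) a = 0 \<and> (\<exists>c. emb t a = c *s X)"
proof
  assume a: "a \<in> gpt q t X"
  then have "a \<in> lspan UNIV (bb q t X)"
    by (simp add: gpt_def ext_def)
  then have "\<exists>c. emb t a = c *s X"
  proof (induction rule: lspan_induct)
    case zero
    show ?case
      by (intro exI[of _ 0]) simp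
  next
    case (add x y)
    then show ?case
      by (metis emb_add vector_sadd_rdistrib)
  next
    case (smult d x)
    then show ?case
      by (metis emb_smult vector_smult_assoc)
  next
    case (base s)
    then show ?case
      by (auto simp: bb_def mem_pcone_UNIV_iff)
  qed
  with a show "a \<noteq> 0 \<and> emb (t ^ q) a = 0 \<and> (\<exists>c. emb t a = c *s X)"
    by (simp add: gpt_def mem_gline_iff)
next
  assume a: "a \<noteq> 0 \<and> emb (t ^ q) a = 0 \<and> (\<exists>c. emb t a = c *s X)"
  then obtain c where "emb t a = c *s X"
    by blast
  moreover obtain a' where "a' \<in> lspan UNIV (bb q t X)" "emb (t ^ q) a' = 0" "emb t a' = c *s X"
    using spread_line_ext_point[OF assms] .
  ultimately have "a = a'" "a' \<in> lspan UNIV (bb q t X)"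
    using a emb_pair_inj[OF t_frob_ne[symmetric]] by auto
  then show "a \<in> gpt q t X"
    using a by (simp add: gpt_def ext_def mem_gline_iff)
qed

lemma dot3_conjv_real: "real_vec n \<Longrightarrow> dot3 n (conjv q w) = (dot3 n w) ^ q"
  by (simp add: dot3_def real_vec_def frob_add power_mult_distrib Fq_iff)

lemma join_gpt_imp_emb_multiples:
  assumes "R \<noteq> 0" "R $ 3 = 0" "S \<noteq> 0" "S $ 3 = 0"
    and "y \<in> join (gpt q t R) (conjv q ` gpt q t S)"
  shows "(\<exists>c. emb t y = c *s R) \<and> (\<exists>c. emb (t ^ q) y = c *s conjv q S)"
proof -
  have "y \<in> lspan UNIV (gpt q t R \<union> conjv q ` gpt q t S)"
    using assms(5) by (simp add: join_def)
  then show ?thesis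
  proof (induction rule: lspan_induct)
    case zero
    show ?case
      by (metis emb_0 vector_smult_lzero)
  next
    case (add x y)
    then show ?case
      by (metis emb_add vector_sadd_rdistrib)
  next
    case (smult d x)
    then show ?case
      by (metis emb_smult vector_smult_assoc)
  next
    case (base s)
    then show ?case
    proof
      assume "s \<in> gpt q t R"
      then show ?thesis
        using assms(1,2) by (metis mem_gpt_iff vector_smult_lzero)
    next
      assume "s \<in> conjv q ` gpt q t S"
      then obtain a c where "s = conjv q a" "emb (t ^ q) a = 0" "emb t a = c *s S"
        using assms(3,4) mem_gpt_iff by blast
      then show ?thesis
        by (metis conjv_0 conjv_smult emb_conjv emb_frob_conjv vector_smult_lzero)
    qed
  qed
qed

lemma mem_join_gpt:
  assumes "R \<noteq> 0" "R $ 3 = 0" "S \<noteq> 0" "S $ 3 = 0"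
    and y: "y \<noteq> 0" "emb t y = c *s R" "emb (t ^ q) y = c' *s conjv q S" and "c \<noteq> 0" "c' \<noteq> 0"
  shows "y \<in> join (gpt q t R) (conjv q ` gpt q t S)"
proof -
  obtain a where a: "emb (t ^ q) a = 0" "emb t a = c *s R"
    using spread_line_ext_point[OF assms(1,2)] by metis
  obtain b where b: "emb (t ^ q) b = 0" "emb t b = c' ^ q *s S"
    using spread_line_ext_point[OF assms(3,4)] by metis
  have "a \<in> gpt q t R" "b \<in> gpt q t S"
    using a b assms by (auto simp: mem_gpt_iff)
  moreover have "a \<noteq> conjv q b"
    using a b assms(1,8) by (auto simp: emb_conjv)
  moreover have "y = a + conjv q b"
    using a b y t_frob_ne
    by (intro emb_pair_inj[of t "t ^ q"]) (simp_all add: emb_add emb_conjv emb_frob_conjv conjv_smult)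
  ultimately have "1 *s a + 1 *s conjv q b \<in> lspan UNIV (gpt q t R \<union> conjv q ` gpt q t S)"
    by (intro lspan_lincomb2) auto
  then show ?thesis
    using y(1) \<open>y = a + conjv q b\<close> by (simp add: join_def)
qed

end

section \<open>A Baer subplane secant to l_inf and an F_q-conic in it\<close>

locale baer_conic = bruck_bose q t for q :: nat and t :: "'k::{finite,field}" +
  fixes M :: "'k ^ 3 ^ 3" and F :: "'k qform" and P Q :: "'k ^ 3"
  assumes invertible_M: "invertible M" and secant: "baer_secant q M"
    and F_over: "qf_over (Fq q) F" and F_nondeg: "nondeg_qf F"
    and P: "P \<noteq> 0" "P $ 3 = 0" and Q: "Q \<noteq> 0" "Q $ 3 = 0"
    and meet: "{X \<in> Cplus_pts M F. X $ 3 = 0} = pcone UNIV P \<union> pcone UNIV Q"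
begin

lemmas M_inverse [simp] = invertible_matrix_inv[OF invertible_M]

lemma M_inj:
  assumes "M *v w = M *v w'"
  shows "w = w'"
proof -
  have "matrix_inv M *v (M *v w) = matrix_inv M *v (M *v w')"
    by (simp only: assms)
  then show ?thesis
    by (simp only: M_inverse)
qed

lemma M_eq_0_iff [simp]: "M *v w = 0 \<longleftrightarrow> w = 0"
  using M_inj[of w 0] by auto

lemma matrix_inv_M_eq_0_iff [simp]: "matrix_inv M *v X = 0 \<longleftrightarrow> X = 0"
proof
  assume "matrix_inv M *v X = 0"
  then have "M *v (matrix_inv M *v X) = 0"
    by simp
  then show "X = 0"
    by (simp only: M_inverse(2))
qed simp

lemma mem_inf_points_iff:
  "X \<in> pcone UNIV P \<union> pcone UNIV Q \<longleftrightarrow> X \<noteq> 0 \<and> X $ 3 = 0 \<and> qf3 F (matrix_inv M *v X) = 0"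
proof -
  have "X \<in> Cplus_pts M F \<longleftrightarrow> X \<noteq> 0 \<and> qf3 F (matrix_inv M *v X) = 0"
  proof
    assume "X \<in> Cplus_pts M F"
    then obtain w where "X = M *v w" "w \<noteq> 0" "qf3 F w = 0"
      unfolding Cplus_pts_def by blast
    then show "X \<noteq> 0 \<and> qf3 F (matrix_inv M *v X) = 0"
      by simp
  next
    assume "X \<noteq> 0 \<and> qf3 F (matrix_inv M *v X) = 0"
    then show "X \<in> Cplus_pts M F"
      unfolding Cplus_pts_def by (intro CollectI exI[of _ "matrix_inv M *v X"]) simp
  qed
  then show ?thesis
    using meet by blast
qed

lemma baer_ptsE:
  assumes "X \<in> baer_pts q M"
  obtains c w where "X = c *s (M *v w)" "c \<noteq> 0" "w \<noteq> 0" "real_vec w"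
  using assms unfolding baer_pts_def real_vec_def by blast

lemma M_real_mem_baer_pts: "real_vec w \<Longrightarrow> w \<noteq> 0 \<Longrightarrow> M *v w \<in> baer_pts q M"
  unfolding baer_pts_def real_vec_def by (intro CollectI exI[of _ 1] exI[of _ w]) simp

text \<open>The line l_inf, pulled back to the frame of the Baer subplane, is GF(q)-rational:
  it contains two distinct Baer points.\<close>
lemma third_row_real_multiple:
  obtains lam n where "lam \<noteq> 0" "real_vec n" "M $ 3 = lam *s n"
proof -
  obtain X Y where XY: "X \<in> baer_pts q M" "Y \<in> baer_pts q M" "X $ 3 = 0" "Y $ 3 = 0"
      "pcone UNIV X \<noteq> pcone UNIV Y"
    using secant unfolding baer_secant_def by blast
  obtain c1 w1 where X: "X = c1 *s (M *v w1)" "c1 \<noteq> 0" "w1 \<noteq> 0" "real_vec w1"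
    using XY(1) by (rule baer_ptsE)
  obtain c2 w2 where Y: "Y = c2 *s (M *v w2)" "c2 \<noteq> 0" "w2 \<noteq> 0" "real_vec w2"
    using XY(2) by (rule baer_ptsE)
  have "dot3 (M $ 3) w1 = 0" "dot3 (M $ 3) w2 = 0"
    using XY(3,4) X(1,2) Y(1,2) by (simp_all add: matrix_vector_mult_component_3)
  moreover have "cross3 w1 w2 \<noteq> 0"
  proof
    assume "cross3 w1 w2 = 0"
    then obtain s where s: "w2 = s *s w1"
      using cross3_eq_0_imp_parallel X(3) by blast
    then have "s \<noteq> 0"
      using Y(3) by auto
    have "Y = (c2 * s / c1) *s X"
      using X Y s by (simp add: vector_scalar_commute vector_smult_assoc)
    then have "pcone UNIV Y = pcone UNIV X"
      using \<open>s \<noteq> 0\<close> X(2) Y(2) by (simp add: pcone_UNIV_smult)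
    then show False
      using XY(5) by simp
  qed
  ultimately obtain lam where lam: "M $ 3 = lam *s cross3 w1 w2"
    using dot3_eq_0_imp_parallel_cross3 by blast
  have "lam \<noteq> 0"
  proof
    assume "lam = 0"
    then have "(M *v w) $ 3 = 0" for w
      using lam by (simp add: matrix_vector_mult_component_3 dot3_def)
    from this[of "matrix_inv M *v vector [0, 0, 1]"] show False
      by simp
  qed
  moreover have "real_vec (cross3 w1 w2)"
    using X(4) Y(4) by (simp add: real_vec_def cross3_def forall_3)
  ultimately show thesis
    using that lam by blast
qed

text \<open>R \<mapsto> M *v conjv q (matrix_inv M *v R) is the Baer involution of B; its fixed points
  are the points of B.\<close>
lemma conj_fixed_imp_mem_baer_pts:
  assumes "R \<noteq> 0" "M *v conjv q (matrix_inv M *v R) \<in> pcone UNIV R"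
  shows "R \<in> baer_pts q M"
proof -
  define w where "w = matrix_inv M *v R"
  obtain e where e: "M *v conjv q w = e *s R"
    using assms(2) by (auto simp: mem_pcone_UNIV_iff w_def)
  then have "M *v conjv q w = M *v (e *s w)"
    by (simp add: w_def vector_scalar_commute)
  then have "conjv q w = e *s w"
    by (rule M_inj)
  moreover have "w \<noteq> 0"
    using assms(1) by (simp add: w_def)
  ultimately obtain r d where r: "real_vec r" "d \<noteq> 0" "w = d *s r"
    using conjv_eq_smult_imp_real_multiple by blast
  have "R = M *v w"
    by (simp add: w_def)
  with r(3) have "R = d *s (M *v r)"
    by (simp add: vector_scalar_commute)
  moreover have "r \<noteq> 0"
    using r \<open>w \<noteq> 0\<close> by auto
  ultimately show ?thesis
    using r unfolding baer_pts_def by (intro CollectI exI[of _ d] exI[of _ r]) (simp add: real_vec_def)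
qed

lemma bb_conic_inter_Sigma_inf:
  "bb_conic q t (\<lambda>X. qf3 F (matrix_inv M *v X)) \<inter> Sigma_inf q = bb q t P \<union> bb q t Q"
proof -
  have "v \<in> bb_conic q t (\<lambda>X. qf3 F (matrix_inv M *v X)) \<inter> Sigma_inf q
      \<longleftrightarrow> v \<in> real5 q \<and> emb t v \<in> pcone UNIV P \<union> pcone UNIV Q" for v
  proof (cases "v \<in> real5 q")
    case True
    then have "emb t v \<noteq> 0"
      using emb_real_eq_0 by (auto simp: mem_real5_iff)
    then show ?thesis
      using mem_inf_points_iff[of "emb t v"] by (auto simp: bb_conic_def Sigma_inf_def)
  qed (simp add: bb_conic_def Sigma_inf_def)
  then show ?thesis
    by (auto simp: bb_def)
qed

end

text \<open>Fix a factorisation of the third row of M as lam times a GF(q)-rational vector n;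
  then bvec j, the rational representative of the j-th column of M / lam, spans [B].\<close>
locale baer_frame = baer_conic q t M F P Q
  for q :: nat and t :: "'k::{finite,field}" and M F P Q +
  fixes lam :: 'k and n :: "'k ^ 3"
  assumes lam_nz: "lam \<noteq> 0" and n_real: "real_vec n" and third_row: "M $ 3 = lam *s n"
begin

lemma M_third: "(M *v w) $ 3 = lam * dot3 n w"
  by (simp add: matrix_vector_mult_component_3 third_row dot3_def algebra_simps)

lemma n_nz: "n \<noteq> 0"
proof
  assume "n = 0"
  then have "(M *v (matrix_inv M *v vector [0, 0, 1])) $ 3 = 0"
    by (simp only: M_third) (simp add: dot3_def)
  then show False
    by simp
qed

lemma exists_real_vec_off_inf: "\<exists>w. real_vec w \<and> dot3 n w \<noteq> 0"
proof -
  obtain i where "n $ i \<noteq> 0"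
    using n_nz by (auto simp: vec_eq_iff)
  moreover have "dot3 n (axis i 1) = n $ i" "real_vec (axis i (1::'k))"
    using exhaust_3[of i] by (auto simp: dot3_def axis_def real_vec_def)
  ultimately show ?thesis
    by metis
qed

lemma dot3_n_Fq: "real_vec w \<Longrightarrow> dot3 n w \<in> Fq q"
  using n_real by (simp add: dot3_def real_vec_def)

definition bvec :: "3 \<Rightarrow> 'k ^ 5" where
  "bvec j = rep ((1 / lam) *s column j M)"

definition lift :: "'k ^ 3 \<Rightarrow> 'k ^ 5" where
  "lift w = w$1 *s bvec 1 + w$2 *s bvec 2 + w$3 *s bvec 3"

definition coords :: "'k ^ 5 \<Rightarrow> 'k ^ 3" where
  "coords v = lam *s (matrix_inv M *v emb t v)"

lemma real_vec_bvec: "real_vec (bvec j)"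
  unfolding bvec_def
proof (rule real_vec_rep)
  have "M $ 3 $ j = lam * n $ j"
    using third_row by simp
  then show "((1 / lam) *s column j M) $ 3 \<in> Fq q"
    using lam_nz n_real by (simp add: column_def real_vec_def)
qed

lemma real_vec_lift: "real_vec w \<Longrightarrow> real_vec (lift w)"
  unfolding lift_def by (intro real_vec_add real_vec_smult real_vec_bvec) (auto simp: real_vec_def)

lemma emb_lift: "emb t (lift w) = (1 / lam) *s (M *v w)"
  by (simp add: lift_def bvec_def emb_add emb_smult matrix_mult_sum sum_3 vector_smult_assoc
      algebra_simps)

lemma lift_add: "lift (v + w) = lift v + lift w"
  by (simp add: lift_def vec_eq_iff algebra_simps)

lemma lift_smult: "lift (c *s w) = c *s lift w"
  by (simp add: lift_def vec_eq_iff algebra_simps)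

lemma coords_add: "coords (v + w) = coords v + coords w"
  by (simp add: coords_def emb_add matrix_vector_right_distrib vector_add_ldistrib)

lemma coords_smult: "coords (c *s v) = c *s coords v"
  by (simp add: coords_def emb_smult vector_scalar_commute vector_smult_assoc mult.commute)

lemma coords_lift [simp]: "coords (lift w) = w"
  using lam_nz by (simp add: coords_def emb_lift vector_scalar_commute vector_smult_assoc)

lemma lift_inj: "lift v = lift w \<Longrightarrow> v = w"
  by (metis coords_lift)

lemma lift_eq_0_iff [simp]: "lift w = 0 \<longleftrightarrow> w = 0"
  using lift_inj[of w 0] by (auto simp: lift_def)

lemma lift_coords: "real_vec v \<Longrightarrow> real_vec (coords v) \<Longrightarrow> lift (coords v) = v"
  using lam_nz by (intro emb_real_inj real_vec_lift)
    (simp_all add: emb_lift coords_def vector_scalar_commute vector_smult_assoc)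

lemma emb_lift_eq_smult_iff: "emb t (lift w) = c *s X \<longleftrightarrow> M *v w = (c * lam) *s X"
proof -
  have eq: "M *v w = lam *s emb t (lift w)"
    using lam_nz by (simp add: emb_lift vector_smult_assoc)
  have "(c * lam) *s X = lam *s (c *s X)"
    by (simp add: vector_smult_assoc mult.commute)
  then show ?thesis
    by (simp only: eq vector_mul_lcancel) (simp add: lam_nz)
qed

lemma emb_frob_lift: "emb (t ^ q) (lift w) = conjv q (emb t (lift (conjv q w)))"
  by (simp add: lift_def emb_add emb_smult emb_frob_real real_vec_bvec conjv_add conjv_smult)

lemma lift_mem_bb:
  assumes "M *v w \<in> pcone UNIV X" "real_vec w" "w \<noteq> 0"
  shows "lift w \<in> bb q t X"
proof -
  obtain c where "c \<noteq> 0" "M *v w = c *s X"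
    using assms(1) by (auto simp: mem_pcone_UNIV_iff)
  then have "emb t (lift w) \<in> pcone UNIV X"
    using lam_nz smult_mem_pcone_UNIV[of "c / lam" X] by (simp add: emb_lift vector_smult_assoc)
  then show ?thesis
    using assms(2,3) by (simp add: bb_def mem_real5_iff real_vec_lift)
qed

lemma real_coords_of_affine_baer_pt:
  assumes "X \<in> baer_pts q M" "X $ 3 \<noteq> 0" "v \<in> bb q t X"
  shows "real_vec v \<and> real_vec (coords v)"
proof -
  obtain c w where cw: "X = c *s (M *v w)" "c \<noteq> 0" "real_vec w"
    using assms(1) by (rule baer_ptsE)
  obtain d where d: "emb t v = d *s X" "real_vec v"
    using assms(3) by (auto simp: bb_def mem_pcone_UNIV_iff mem_real5_iff)
  have "v $ 5 = (d * c * lam) * dot3 n w"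
    using arg_cong[OF d(1), of "\<lambda>X. X $ 3"] cw(1) by (simp add: M_third)
  moreover have "dot3 n w \<noteq> 0"
    using assms(2) cw(1) by (simp add: M_third)
  moreover have "v $ 5 \<in> Fq q"
    using d(2) by (simp add: real_vec_def)
  ultimately have "d * c * lam \<in> Fq q"
    using dot3_n_Fq[OF cw(3)] by (metis Fq_closed(4) nonzero_mult_div_cancel_right)
  moreover have "coords v = (d * c * lam) *s w"
    using d(1) cw(1) lam_nz by (simp add: coords_def vector_scalar_commute vector_smult_assoc mult.commute)
  ultimately show ?thesis
    using d(2) cw(3) by (simp add: real_vec_smult)
qed

lemma bb_baer_eq: "bb_baer q t M = lift ` {w. real_vec w \<and> w \<noteq> 0}"
proof
  show "bb_baer q t M \<subseteq> lift ` {w. real_vec w \<and> w \<noteq> 0}"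
  proof
    fix v
    assume "v \<in> bb_baer q t M"
    then have v: "v \<in> lspan (Fq q) (\<Union>{bb q t X | X. X \<in> baer_pts q M \<and> X $ 3 \<noteq> 0})" "v \<noteq> 0"
      by (auto simp: bb_baer_def)
    from v(1) have "real_vec v \<and> real_vec (coords v)"
    proof (induction rule: lspan_induct)
      case (add x y)
      then show ?case
        by (simp add: real_vec_add coords_add)
    next
      case (smult c x)
      then show ?case
        by (simp add: real_vec_smult coords_smult)
    next
      case (base s)
      then obtain X where "X \<in> baer_pts q M" "X $ 3 \<noteq> 0" "s \<in> bb q t X"
        by blast
      then show ?case
        by (rule real_coords_of_affine_baer_pt)
    qed (simp add: coords_def)
    then have "lift (coords v) = v" "real_vec (coords v)"
      using lift_coords by auto
    moreover have "coords v \<noteq> 0"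
      using calculation(1) v(2) by auto
    ultimately show "v \<in> lift ` {w. real_vec w \<and> w \<noteq> 0}"
      by (intro image_eqI[of _ _ "coords v"]) auto
  qed
next
  show "lift ` {w. real_vec w \<and> w \<noteq> 0} \<subseteq> bb_baer q t M"
  proof clarify
    fix w :: "'k ^ 3"
    assume w: "real_vec w" "w \<noteq> 0"
    let ?G = "\<Union>{bb q t X | X. X \<in> baer_pts q M \<and> X $ 3 \<noteq> 0}"
    have gen: "lift w' \<in> ?G"
      if "real_vec w'" "dot3 n w' \<noteq> 0" for w'
    proof -
      have "w' \<noteq> 0"
        using that(2) by (auto simp: dot3_def)
      then have "lift w' \<in> bb q t (M *v w')" "M *v w' \<in> baer_pts q M"
        using that(1) by (simp_all add: lift_mem_bb self_mem_pcone_UNIV M_real_mem_baer_pts)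
      moreover have "(M *v w') $ 3 \<noteq> 0"
        using that(2) lam_nz by (simp add: M_third)
      ultimately show ?thesis
        by blast
    qed
    obtain w0 where w0: "real_vec w0" "dot3 n w0 \<noteq> 0"
      using exists_real_vec_off_inf by blast
    have "lift w \<in> lspan (Fq q) ?G"
    proof (cases "dot3 n w = 0")
      case False
      then show ?thesis
        using gen w(1) by (intro lspan_superset) auto
    next
      case True
      have "lift (w + w0) \<in> ?G"
        using True w(1) w0 by (intro gen) (simp_all add: real_vec_add dot3_add_right)
      moreover have "lift w0 \<in> ?G"
        using w0 by (rule gen)
      moreover have "lift (w + w0) \<noteq> lift w0"
        using w(2) by (simp add: lift_add)
      moreover have "(- 1 :: 'k) \<in> Fq q"
        by simp
      ultimately have "1 *s lift (w + w0) + (- 1) *s lift w0 \<in> lspan (Fq q) ?G"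
        by (intro lspan_lincomb2) simp_all
      then show ?thesis
        by (simp add: lift_add)
    qed
    then show "lift w \<in> bb_baer q t M"
      using w(2) by (simp add: bb_baer_def)
  qed
qed

lemma lift_mem_bb_iff:
  assumes "real_vec w" "w \<noteq> 0"
  shows "lift w \<in> bb q t X \<longleftrightarrow> M *v w \<in> pcone UNIV X"
proof
  assume "lift w \<in> bb q t X"
  then obtain c where "c \<noteq> 0" "emb t (lift w) = c *s X"
    by (auto simp: bb_def mem_pcone_UNIV_iff)
  then show "M *v w \<in> pcone UNIV X"
    using lam_nz by (simp add: emb_lift_eq_smult_iff smult_mem_pcone_UNIV)
qed (rule lift_mem_bb[OF _ assms])

lemma bb_affine_subset_bb_baer:
  "X \<in> baer_pts q M \<Longrightarrow> X $ 3 \<noteq> 0 \<Longrightarrow> bb q t X \<subseteq> bb_baer q t M"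
  unfolding bb_baer_def by (auto simp: bb_def mem_real5_iff intro!: lspan_superset)

lemma bb_sub_eq:
  "bb_sub q t M (Fq_conic_pts q M F) = lift ` {w. real_vec w \<and> w \<noteq> 0 \<and> qf3 F w = 0}"
proof
  show "bb_sub q t M (Fq_conic_pts q M F) \<subseteq> lift ` {w. real_vec w \<and> w \<noteq> 0 \<and> qf3 F w = 0}"
  proof
    fix v
    assume "v \<in> bb_sub q t M (Fq_conic_pts q M F)"
    then obtain X where X: "X \<in> Fq_conic_pts q M F" "v \<in> bb q t X" "v \<in> bb_baer q t M"
      unfolding bb_sub_def using bb_affine_subset_bb_baer
      by (auto simp: Fq_conic_pts_def baer_pts_def)
    obtain c w where cw: "X = c *s (M *v w)" "c \<noteq> 0" "qf3 F w = 0"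
      using X(1) unfolding Fq_conic_pts_def by blast
    obtain w' where w': "v = lift w'" "real_vec w'" "w' \<noteq> 0"
      using X(3) by (auto simp: bb_baer_eq)
    then have "M *v w' \<in> pcone UNIV (M *v w)"
      using X(2) cw(1,2) by (simp add: lift_mem_bb_iff pcone_UNIV_smult)
    then obtain d where "w' = d *s w"
      by (auto simp: mem_pcone_UNIV_iff simp flip: vector_scalar_commute dest: M_inj)
    then have "qf3 F w' = 0"
      using cw(3) by (simp add: qf3_smult)
    then show "v \<in> lift ` {w. real_vec w \<and> w \<noteq> 0 \<and> qf3 F w = 0}"
      using w' by blast
  qed
next
  show "lift ` {w. real_vec w \<and> w \<noteq> 0 \<and> qf3 F w = 0} \<subseteq> bb_sub q t M (Fq_conic_pts q M F)"
  proof clarify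
    fix w :: "'k ^ 3"
    assume w: "real_vec w" "w \<noteq> 0" "qf3 F w = 0"
    have "M *v w \<in> Fq_conic_pts q M F"
      using w unfolding Fq_conic_pts_def real_vec_def
      by (intro CollectI exI[of _ 1] exI[of _ w]) simp
    moreover have "lift w \<in> bb q t (M *v w)" "lift w \<in> bb_baer q t M"
      using w by (auto simp: lift_mem_bb_iff self_mem_pcone_UNIV bb_baer_eq)
    ultimately show "lift w \<in> bb_sub q t M (Fq_conic_pts q M F)"
      unfolding bb_sub_def by blast
  qed
qed

lemma lincomb_bvec_eq_lift: "a *s bvec 1 + b *s bvec 2 + c *s bvec 3 = lift (vector [a, b, c])"
  by (simp add: lift_def)

lemma conic_on_bvec_eq:
  "conic_on K (bvec 1) (bvec 2) (bvec 3) F = lift ` {w. (\<forall>i. w $ i \<in> K) \<and> w \<noteq> 0 \<and> qf3 F w = 0}"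
proof (rule Set.set_eqI, rule iffI)
  fix x
  assume "x \<in> conic_on K (bvec 1) (bvec 2) (bvec 3) F"
  then obtain a b c where "x = a *s bvec 1 + b *s bvec 2 + c *s bvec 3" "a \<in> K" "b \<in> K" "c \<in> K"
      "(a, b, c) \<noteq> (0, 0, 0)" "qf F a b c = 0"
    unfolding conic_on_def by blast
  then show "x \<in> lift ` {w. (\<forall>i. w $ i \<in> K) \<and> w \<noteq> 0 \<and> qf3 F w = 0}"
    by (intro image_eqI[of _ _ "vector [a, b, c]"])
      (simp_all add: lincomb_bvec_eq_lift qf3_def forall_3 vector_3_eq_0_iff)
next
  fix x
  assume "x \<in> lift ` {w. (\<forall>i. w $ i \<in> K) \<and> w \<noteq> 0 \<and> qf3 F w = 0}"
  then obtain w where "x = lift w" "\<forall>i. w $ i \<in> K" "w \<noteq> 0" "qf3 F w = 0"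
    by blast
  then show "x \<in> conic_on K (bvec 1) (bvec 2) (bvec 3) F"
    unfolding conic_on_def
    by (intro CollectI exI[of _ "w $ 1"] exI[of _ "w $ 2"] exI[of _ "w $ 3"])
      (simp add: lift_def qf3_def vec_eq_iff_3)
qed

lemma plane_pts_bvec_eq: "plane_pts q (bvec 1) (bvec 2) (bvec 3) = bb_baer q t M"
  unfolding bb_baer_eq
proof (rule Set.set_eqI, rule iffI)
  fix x
  assume "x \<in> plane_pts q (bvec 1) (bvec 2) (bvec 3)"
  then obtain a b c where "x = a *s bvec 1 + b *s bvec 2 + c *s bvec 3" "a \<in> Fq q" "b \<in> Fq q"
      "c \<in> Fq q" "(a, b, c) \<noteq> (0, 0, 0)"
    unfolding plane_pts_def by blast
  then show "x \<in> lift ` {w. real_vec w \<and> w \<noteq> 0}"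
    by (intro image_eqI[of _ _ "vector [a, b, c]"])
      (simp_all add: lincomb_bvec_eq_lift real_vec_def forall_3 vector_3_eq_0_iff)
next
  fix x
  assume "x \<in> lift ` {w. real_vec w \<and> w \<noteq> 0}"
  then obtain w where "x = lift w" "real_vec w" "w \<noteq> 0"
    by blast
  then show "x \<in> plane_pts q (bvec 1) (bvec 2) (bvec 3)"
    unfolding plane_pts_def
    by (intro CollectI exI[of _ "w $ 1"] exI[of _ "w $ 2"] exI[of _ "w $ 3"])
      (simp add: lift_def real_vec_def vec_eq_iff_3)
qed

lemma conic_rep_bb_sub: "conic_rep q (bb_sub q t M (Fq_conic_pts q M F)) (bvec 1) (bvec 2) (bvec 3) F"
proof -
  have "bvec j = lift (axis j 1)" for j
    using exhaust_3[of j] by (auto simp: lift_def axis_def)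
  then have "bvec j \<noteq> 0" for j
    by (simp add: axis_eq_0_iff)
  then have "bvec j \<in> real5 q" for j
    by (simp add: mem_real5_iff real_vec_bvec)
  moreover have "Fq_indep3 q (bvec 1) (bvec 2) (bvec 3)"
    by (simp add: Fq_indep3_def lincomb_bvec_eq_lift vec_eq_iff_3)
  moreover have "bb_sub q t M (Fq_conic_pts q M F) = conic_on (Fq q) (bvec 1) (bvec 2) (bvec 3) F"
    by (simp add: bb_sub_eq conic_on_bvec_eq real_vec_def)
  ultimately show ?thesis
    using F_over F_nondeg by (simp add: conic_rep_def)
qed

lemma nondeg_conic_bb_sub: "nondeg_conic_in_plane q (bb_sub q t M (Fq_conic_pts q M F)) (bb_baer q t M)"
  using conic_rep_bb_sub plane_pts_bvec_eq unfolding nondeg_conic_in_plane_def by metis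

lemma lift_component_5: "lift w $ 5 = dot3 n w"
proof -
  have "lift w $ 5 = emb t (lift w) $ 3"
    by simp
  also have "\<dots> = dot3 n w"
    using lam_nz by (simp add: emb_lift M_third)
  finally show ?thesis .
qed

text \<open>The Baer involution preserves C^+ because F is rational, and l_inf because n is.\<close>
lemma conj_inf_point_mem:
  assumes "R \<in> pcone UNIV P \<union> pcone UNIV Q"
  shows "M *v conjv q (matrix_inv M *v R) \<in> pcone UNIV P \<union> pcone UNIV Q"
proof -
  define w where "w = matrix_inv M *v R"
  from assms have "R \<noteq> 0 \<and> R $ 3 = 0 \<and> qf3 F w = 0"
    unfolding w_def using mem_inf_points_iff by blast
  then have R: "R \<noteq> 0" "R $ 3 = 0" "qf3 F w = 0"
    by simp_all
  then have "dot3 n w = 0"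
    using lam_nz M_third[of w] by (simp add: w_def)
  then have "(M *v conjv q w) $ 3 = 0"
    using n_real by (simp add: M_third dot3_conjv_real)
  moreover have "qf3 F (conjv q w) = 0"
    using R(3) F_over by (simp add: qf3_conjv)
  ultimately show ?thesis
    using R(1) mem_inf_points_iff[of "M *v conjv q w"] by (simp add: w_def)
qed

lemma tangent_mem_baer_pts: "pcone UNIV P = pcone UNIV Q \<Longrightarrow> P \<in> baer_pts q M"
  using conj_inf_point_mem[of P] self_mem_pcone_UNIV[of P] conj_fixed_imp_mem_baer_pts P(1) by auto

lemma lift_mem_pcone_iff:
  assumes "real_vec w" "real_vec r" "r \<noteq> 0"
  shows "M *v w \<in> pcone UNIV (M *v r) \<longleftrightarrow> lift w \<in> pcone (Fq q) (lift r)"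
proof
  assume "M *v w \<in> pcone UNIV (M *v r)"
  then obtain d where d: "d \<noteq> 0" "w = d *s r"
    by (auto simp: mem_pcone_UNIV_iff simp flip: vector_scalar_commute dest: M_inj)
  obtain i where "r $ i \<noteq> 0"
    using assms(3) by (auto simp: vec_eq_iff)
  then have "d \<in> Fq q"
    using assms(1,2) d(2) by (metis Fq_closed(4) nonzero_mult_div_cancel_right real_vec_def
        vector_smult_component)
  then show "lift w \<in> pcone (Fq q) (lift r)"
    using d by (auto simp: pcone_def lift_smult)
next
  assume "lift w \<in> pcone (Fq q) (lift r)"
  then obtain d where "d \<noteq> 0" "lift w = lift (d *s r)"
    by (auto simp: pcone_def lift_smult)
  then show "M *v w \<in> pcone UNIV (M *v r)"
    by (auto simp: vector_scalar_commute smult_mem_pcone_UNIV dest: lift_inj)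
qed

lemma bb_inter_bb_baer_eq:
  assumes "R \<in> baer_pts q M"
  obtains r where "real_vec r" "r \<noteq> 0" "bb q t R \<inter> bb_baer q t M = pcone (Fq q) (lift r)"
proof -
  obtain c r where r: "R = c *s (M *v r)" "c \<noteq> 0" "r \<noteq> 0" "real_vec r"
    using assms by (rule baer_ptsE)
  have "v \<in> bb q t R \<inter> bb_baer q t M \<longleftrightarrow> v \<in> pcone (Fq q) (lift r)" for v
  proof
    assume "v \<in> bb q t R \<inter> bb_baer q t M"
    then obtain w where "v = lift w" "real_vec w" "w \<noteq> 0" "lift w \<in> bb q t R"
      by (auto simp: bb_baer_eq)
    then show "v \<in> pcone (Fq q) (lift r)"
      using r by (simp add: lift_mem_bb_iff pcone_UNIV_smult lift_mem_pcone_iff)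
  next
    assume v: "v \<in> pcone (Fq q) (lift r)"
    then obtain d where d: "d \<in> Fq q" "d \<noteq> 0" "v = lift (d *s r)"
      by (auto simp: pcone_def lift_smult)
    then have "real_vec (d *s r)" "d *s r \<noteq> 0"
      using r by (simp_all add: real_vec_smult)
    then show "v \<in> bb q t R \<inter> bb_baer q t M"
      using d v r
      by (auto simp: bb_baer_eq lift_mem_bb_iff pcone_UNIV_smult lift_mem_pcone_iff)
  qed
  then show thesis
    using that r by blast
qed

lemma is_point_bb_inter_bb_baer:
  assumes "R \<in> baer_pts q M"
  shows "is_point (Fq q) (bb q t R \<inter> bb_baer q t M)"
proof -
  obtain r where "real_vec r" "r \<noteq> 0" "bb q t R \<inter> bb_baer q t M = pcone (Fq q) (lift r)"
    using assms by (rule bb_inter_bb_baer_eq)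
  then show ?thesis
    unfolding is_point_def using real_vec_lift[of r]
    by (intro exI[of _ "lift r"]) (auto simp: real_vec_def)
qed

lemma bb_inter_bb_baer_distinct:
  assumes "pcone UNIV P \<noteq> pcone UNIV Q" "P \<in> baer_pts q M"
  shows "bb q t P \<inter> bb_baer q t M \<noteq> bb q t Q \<inter> bb_baer q t M"
proof
  assume eq: "bb q t P \<inter> bb_baer q t M = bb q t Q \<inter> bb_baer q t M"
  obtain r where r: "r \<noteq> 0" "bb q t P \<inter> bb_baer q t M = pcone (Fq q) (lift r)"
    using assms(2) by (rule bb_inter_bb_baer_eq)
  have "lift r \<in> pcone (Fq q) (lift r)"
    unfolding pcone_def by (auto intro!: exI[of _ 1])
  then have "emb t (lift r) \<in> pcone UNIV P" "emb t (lift r) \<in> pcone UNIV Q"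
    using r(2) eq by (auto simp: bb_def)
  then obtain c c' where "c \<noteq> 0" "emb t (lift r) = c *s P" "c' \<noteq> 0" "emb t (lift r) = c' *s Q"
    by (auto simp: mem_pcone_UNIV_iff)
  then have "pcone UNIV P = pcone UNIV Q"
    by (metis pcone_UNIV_smult)
  then show False
    using assms(1) by simp
qed

lemma bb_sub_inter_Sigma_inf:
  "bb_sub q t M (Fq_conic_pts q M F) \<inter> Sigma_inf q
     = (bb q t P \<inter> bb_baer q t M) \<union> (bb q t Q \<inter> bb_baer q t M)"
proof -
  have "lift w \<in> Sigma_inf q \<and> qf3 F w = 0 \<longleftrightarrow> lift w \<in> bb q t P \<union> bb q t Q"
    if "real_vec w" "w \<noteq> 0" for w
    using that lam_nz mem_inf_points_iff[of "M *v w"]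
    by (auto simp: Sigma_inf_def mem_real5_iff real_vec_lift lift_component_5 M_third
        lift_mem_bb_iff)
  then show ?thesis
    by (auto simp: bb_sub_eq bb_baer_eq)
qed

text \<open>The common point is lift (matrix_inv M *v R): emb t maps it to R, emb (t^q) to a
  multiple of conjv q S.\<close>
lemma special_point:
  assumes R: "R \<in> pcone UNIV P \<union> pcone UNIV Q" and S: "S \<noteq> 0" "S $ 3 = 0"
    and conj: "M *v conjv q (matrix_inv M *v R) \<in> pcone UNIV S"
  shows "is_point UNIV (conic_on UNIV (bvec 1) (bvec 2) (bvec 3) F
                        \<inter> join (gpt q t R) (conjv q ` gpt q t S))"
proof -
  define w where "w = matrix_inv M *v R"
  from R have "R \<noteq> 0 \<and> R $ 3 = 0 \<and> qf3 F w = 0"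
    unfolding w_def using mem_inf_points_iff by blast
  then have R': "R \<noteq> 0" "R $ 3 = 0" "qf3 F w = 0"
    by simp_all
  obtain d where d: "d \<noteq> 0" "M *v conjv q w = d *s S"
    using conj by (auto simp: mem_pcone_UNIV_iff w_def)
  have emb_x: "emb t (lift w) = (1 / lam) *s R"
    by (simp add: emb_lift w_def)
  have emb_frob_x: "emb (t ^ q) (lift w) = (d / lam) ^ q *s conjv q S"
    by (simp add: emb_frob_lift emb_lift d(2) vector_smult_assoc conjv_smult power_divide)
  have "conic_on UNIV (bvec 1) (bvec 2) (bvec 3) F \<inter> join (gpt q t R) (conjv q ` gpt q t S)
      = pcone UNIV (lift w)"
  proof (rule Set.set_eqI, rule iffI)
    fix y
    assume y: "y \<in> conic_on UNIV (bvec 1) (bvec 2) (bvec 3) F \<inter> join (gpt q t R) (conjv q ` gpt q t S)"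
    then obtain v where v: "y = lift v" "v \<noteq> 0"
      by (auto simp: conic_on_bvec_eq)
    obtain c where "emb t y = c *s R"
      using join_gpt_imp_emb_multiples[OF R'(1,2) S] y by blast
    then have "M *v v = M *v ((c * lam) *s w)"
      using v(1) by (simp add: emb_lift_eq_smult_iff w_def vector_scalar_commute)
    then have "v = (c * lam) *s w"
      by (rule M_inj)
    then show "y \<in> pcone UNIV (lift w)"
      using v by (auto simp: lift_smult smult_mem_pcone_UNIV)
  next
    fix y
    assume "y \<in> pcone UNIV (lift w)"
    then obtain e where e: "e \<noteq> 0" "y = lift (e *s w)"
      by (auto simp: mem_pcone_UNIV_iff lift_smult)
    have "w \<noteq> 0"
      using R'(1) by (simp add: w_def)
    then have "y \<in> conic_on UNIV (bvec 1) (bvec 2) (bvec 3) F"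
      using e R'(3) by (auto simp: conic_on_bvec_eq qf3_smult)
    moreover have "y \<in> join (gpt q t R) (conjv q ` gpt q t S)"
    proof (rule mem_join_gpt[OF R'(1,2) S])
      show "y \<noteq> 0"
        using e \<open>w \<noteq> 0\<close> by simp
      show "emb t y = (e / lam) *s R"
        using e(2) emb_x by (simp add: lift_smult emb_smult vector_smult_assoc)
      show "emb (t ^ q) y = (e * (d / lam) ^ q) *s conjv q S"
        using e(2) emb_frob_x by (simp add: lift_smult emb_smult vector_smult_assoc)
      show "e / lam \<noteq> 0" "e * (d / lam) ^ q \<noteq> 0"
        using e(1) d(1) lam_nz by simp_all
    qed
    ultimately show "y \<in> conic_on UNIV (bvec 1) (bvec 2) (bvec 3) F
                          \<inter> join (gpt q t R) (conjv q ` gpt q t S)"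
      by blast
  qed
  moreover have "lift w \<noteq> 0"
    using R'(1) by (simp add: w_def)
  ultimately show ?thesis
    unfolding is_point_def by blast
qed

lemma special_bb_sub:
  assumes "P \<notin> baer_pts q M" "Q \<notin> baer_pts q M"
  shows "special q (gpt q t P) (gpt q t Q) (bb_sub q t M (Fq_conic_pts q M F))"
proof -
  have "P \<in> pcone UNIV P \<union> pcone UNIV Q" "Q \<in> pcone UNIV P \<union> pcone UNIV Q"
    by (simp_all add: self_mem_pcone_UNIV)
  moreover have "M *v conjv q (matrix_inv M *v P) \<in> pcone UNIV Q"
    "M *v conjv q (matrix_inv M *v Q) \<in> pcone UNIV P"
    using conj_inf_point_mem calculation conj_fixed_imp_mem_baer_pts assms P(1) Q(1) by blast+
  ultimately have
    "is_point UNIV (conic_on UNIV (bvec 1) (bvec 2) (bvec 3) F \<inter> join (gpt q t P) (conjv q ` gpt q t Q))"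
    "is_point UNIV (conic_on UNIV (bvec 1) (bvec 2) (bvec 3) F \<inter> join (conjv q ` gpt q t P) (gpt q t Q))"
    using special_point P Q by (auto simp: join_def Un_commute)
  then show ?thesis
    unfolding special_def using conic_rep_bb_sub by blast
qed

end

theorem theorem5p3:
  fixes q :: nat and t :: "'k::{finite,field}" and M :: "'k ^ 3 ^ 3"
    and F :: "'k qform" and P Q :: "'k ^ 3"
  assumes card: "CARD('k) = q ^ 2"
    and prim: "primitive_elt t"
    and M: "invertible M"
    and secant: "baer_secant q M"
    and F: "qf_over (Fq q) F" "nondeg_qf F"
    and P: "P \<noteq> 0" "P $ 3 = 0"
    and Q: "Q \<noteq> 0" "Q $ 3 = 0"
    and meet: "{X \<in> Cplus_pts M F. X $ 3 = 0} = pcone UNIV P \<union> pcone UNIV Q"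
  shows "nondeg_conic_in_plane q (bb_sub q t M (Fq_conic_pts q M F)) (bb_baer q t M)
     \<and> bb_conic q t (\<lambda>X. qf3 F (matrix_inv M *v X)) \<inter> Sigma_inf q = bb q t P \<union> bb q t Q
     \<and> (pcone UNIV P = pcone UNIV Q \<longrightarrow>
          P \<in> baer_pts q M
          \<and> is_point (Fq q) (bb q t P \<inter> bb_baer q t M)
          \<and> bb_sub q t M (Fq_conic_pts q M F) \<inter> Sigma_inf q = bb q t P \<inter> bb_baer q t M)
     \<and> (pcone UNIV P \<noteq> pcone UNIV Q \<and> P \<in> baer_pts q M \<and> Q \<in> baer_pts q M \<longrightarrow>
          is_point (Fq q) (bb q t P \<inter> bb_baer q t M)
          \<and> is_point (Fq q) (bb q t Q \<inter> bb_baer q t M)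
          \<and> bb q t P \<inter> bb_baer q t M \<noteq> bb q t Q \<inter> bb_baer q t M
          \<and> bb_sub q t M (Fq_conic_pts q M F) \<inter> Sigma_inf q
              = (bb q t P \<inter> bb_baer q t M) \<union> (bb q t Q \<inter> bb_baer q t M))
     \<and> (pcone UNIV P \<noteq> pcone UNIV Q \<and> P \<notin> baer_pts q M \<and> Q \<notin> baer_pts q M \<longrightarrow>
          special q (gpt q t P) (gpt q t Q) (bb_sub q t M (Fq_conic_pts q M F)))"
proof -
  interpret baer_conic q t M F P Q
    by unfold_locales (use card prim M secant F P Q meet in auto)
  obtain lam n where "lam \<noteq> 0" "real_vec n" "M $ 3 = lam *s n"
    by (rule third_row_real_multiple)
  then interpret baer_frame q t M F P Q lam n
    by unfold_locales
  have "bb q t Q = bb q t P" if "pcone UNIV P = pcone UNIV Q"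
    using that by (simp add: bb_def)
  then show ?thesis
    using nondeg_conic_bb_sub bb_conic_inter_Sigma_inf tangent_mem_baer_pts
      is_point_bb_inter_bb_baer bb_sub_inter_Sigma_inf bb_inter_bb_baer_distinct special_bb_sub
    by auto
qed

end
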